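(* If $t\in\mathtt T_J$ is typable in $\cap J$ (i.e. $\Gamma\vdash t:\sigma$ for some $\Gamma,\sigma$), then $t$ is strongly normalizing for $\to_\beta\cup\to_\pi$.
   Context: Terms $\mathtt T_J$: $t,u,r ::= x \mid \lambda x.t \mid t(u,y.r)$ ($y$ bound in $r$), up to $\alpha$-equivalence; $\{u/x\}t$ capture-avoiding substitution. Rules of $\Lambda J$: $\beta$: $(\lambda x.t)(u,y.r)\mapsto\{\{u/x\}t/y\}r$; $\pi$: $t(u,x.r)(u',y.r')\mapsto t(u,x.r(u',y.r'))$ (with $x\notin\mathrm{fv}(u')\cup\mathrm{fv}(r')$); $\to_\beta,\to_\pi$ their closures under all contexts. System $\cap J$: types $\sigma,\tau ::= \alpha \mid \mathcal M\to\sigma$, $\mathcal M=[\sigma_i]_{i\in I}$ a finite possibly empty multiset; $\sqcup$ multiset union; environments map variables to multisets, $\wedge$ pointwise union, $\Gamma;x:\mathcal M$ extension with $x\notin\mathrm{dom}\,\Gamma$. $\mathrm{ch}(\mathcal M)=\mathcal M$ if $\mathcal M\ne[\,]$, $\mathrm{ch}([\,])=[\tau]$ for an arbitrary $\tau$. Rules: (var) $x:[\sigma]\vdash x:\sigma$; (abs) from $\Gamma;x:\mathcal M\vdash t:\sigma$ infer $\Gamma\vdash\lambda x.t:\mathcal M\to\sigma$; (many) from $(\Gamma_i\vdash t:\sigma_i)_{i\in I}$, $I\ne\emptyset$, infer $\wedge_i\Gamma_i\vdash t:[\sigma_i]_{i\in I}$; (app) from $\Gamma\vdash t:\mathrm{ch}([\mathcal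 M_i\to\tau_i]_{i\in I})$, $\Delta\vdash u:\mathrm{ch}(\sqcup_i\mathcal M_i)$, $\Lambda;y:[\tau_i]_{i\in I}\vdash r:\sigma$ infer $\Gamma\wedge\Delta\wedge\Lambda\vdash t(u,y.r):\sigma$. *)

theory Defs
  imports "HOL-Library.Multiset"
begin

text \<open>Terms up to alpha-equivalence are represented with de Bruijn indices.
  \<open>JApp t u r\<close> stands for \<open>t(u, y.r)\<close>; the variable \<open>y\<close> is bound in \<open>r\<close>
  and is index 0 there.\<close>

datatype trm = JVar nat | JLam trm | JApp trm trm trm

fun lift :: "nat \<Rightarrow> trm \<Rightarrow> trm" where
  "lift k (JVar i) = (if i < k then JVar i else JVar (Suc i))"
| "lift k (JLam t) = JLam (lift (Suc k) t)"
| "lift k (JApp t u r) = JApp (lift k t) (lift k u) (lift (Suc k) r)"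

text \<open>\<open>subst t k s\<close>: capture-avoiding substitution of \<open>s\<close> for index \<open>k\<close> in \<open>t\<close>,
  removing that index (free indices above \<open>k\<close> are decremented).\<close>
fun subst :: "trm \<Rightarrow> nat \<Rightarrow> trm \<Rightarrow> trm" where
  "subst (JVar i) k s = (if i < k then JVar i else if i = k then s else JVar (i - 1))"
| "subst (JLam t) k s = JLam (subst t (Suc k) (lift 0 s))"
| "subst (JApp t u r) k s = JApp (subst t k s) (subst u k s) (subst r (Suc k) (lift 0 s))"

inductive beta :: "trm \<Rightarrow> trm \<Rightarrow> bool" where
  beta_root: "beta (JApp (JLam t) u r) (subst r 0 (subst t 0 u))"
| beta_lam: "beta t t' \<Longrightarrow> beta (JLam t) (JLam t')"
| beta_app1: "beta t t' \<Longrightarrow> beta (JApp t u r) (JApp t' u r)"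
| beta_app2: "beta u u' \<Longrightarrow> beta (JApp t u r) (JApp t u' r)"
| beta_app3: "beta r r' \<Longrightarrow> beta (JApp t u r) (JApp t u r')"

text \<open>pi: t(u,x.r)(u',y.r') \<mapsto> t(u,x.r(u',y.r')); the side condition
  x \<notin> fv(u') \<union> fv(r') is realised by shifting u' and r' past the new binder x.\<close>
inductive pi :: "trm \<Rightarrow> trm \<Rightarrow> bool" where
  pi_root: "pi (JApp (JApp t u r) u' r') (JApp t u (JApp r (lift 0 u') (lift 1 r')))"
| pi_lam: "pi t t' \<Longrightarrow> pi (JLam t) (JLam t')"
| pi_app1: "pi t t' \<Longrightarrow> pi (JApp t u r) (JApp t' u r)"
| pi_app2: "pi u u' \<Longrightarrow> pi (JApp t u r) (JApp t u' r)"
| pi_app3: "pi r r' \<Longrightarrow> pi (JApp t u r) (JApp t u r')"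

definition beta_pi :: "trm \<Rightarrow> trm \<Rightarrow> bool" where
  "beta_pi t t' \<longleftrightarrow> beta t t' \<or> pi t t'"

definition SN :: "(trm \<Rightarrow> trm \<Rightarrow> bool) \<Rightarrow> trm \<Rightarrow> bool" where
  "SN R t \<longleftrightarrow> Wellfounded.accp (\<lambda>t' t. R t t') t"

datatype ty = TAtom nat | TArr "ty multiset" ty

type_synonym env = "nat \<Rightarrow> ty multiset"

definition env_union :: "env \<Rightarrow> env \<Rightarrow> env" (infixl "\<and>\<^sub>e" 65) where
  "env_union \<Gamma> \<Delta> = (\<lambda>x. \<Gamma> x + \<Delta> x)"

text \<open>\<open>env_ext \<Gamma> M\<close> is \<open>\<Gamma>; x:M\<close> where x is the freshly bound index 0.\<close>
definition env_ext :: "env \<Rightarrow> ty multiset \<Rightarrow> env" where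
  "env_ext \<Gamma> M = (\<lambda>x. case x of 0 \<Rightarrow> M | Suc n \<Rightarrow> \<Gamma> n)"

definition env_single :: "nat \<Rightarrow> ty \<Rightarrow> env" where
  "env_single x \<sigma> = (\<lambda>y. if y = x then {#\<sigma>#} else {#})"

definition env_empty :: env where "env_empty = (\<lambda>_. {#})"

definition ch :: "ty multiset \<Rightarrow> ty \<Rightarrow> ty multiset" where
  "ch M \<tau> = (if M = {#} then {#\<tau>#} else M)"

inductive typing :: "env \<Rightarrow> trm \<Rightarrow> ty \<Rightarrow> bool"
  and mtyping :: "env \<Rightarrow> trm \<Rightarrow> ty multiset \<Rightarrow> bool" where
  t_var: "typing (env_single x \<sigma>) (JVar x) \<sigma>"
| t_abs: "typing (env_ext \<Gamma> M) t \<sigma> \<Longrightarrow> typing \<Gamma> (JLam t) (TArr M \<sigma>)"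
| t_app: "\<lbrakk> mtyping \<Gamma> t (ch (mset (map (\<lambda>(M, \<tau>). TArr M \<tau>) ps)) \<tau>1);
           mtyping \<Delta> u (ch (sum_list (map fst ps)) \<tau>2);
           typing (env_ext \<Lambda> (mset (map snd ps))) r \<sigma> \<rbrakk>
          \<Longrightarrow> typing (\<Gamma> \<and>\<^sub>e \<Delta> \<and>\<^sub>e \<Lambda>) (JApp t u r) \<sigma>"
| m_one: "typing \<Gamma> t \<sigma> \<Longrightarrow> mtyping \<Gamma> t {#\<sigma>#}"
| m_add: "\<lbrakk> mtyping \<Gamma> t M; typing \<Delta> t \<sigma> \<rbrakk> \<Longrightarrow> mtyping (\<Gamma> \<and>\<^sub>e \<Delta>) t (M + {#\<sigma>#})"

end

theory Submission
  imports Defs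
begin

(* Typability in cap-J is quantitative. Annotate derivations with their size and relax
   environments to contain at least the assumptions used. Substituting a multi-typed term for a
   variable replaces each of the axioms for that variable by one derivation of the substituted term,
   so the size of the derivation of the contractum of a beta-redex is strictly smaller. A pi-step
   merely regroups a derivation and does not increase its size; pi alone terminates because it
   decreases a polynomial interpretation of terms. Hence every beta/pi-step decreases the pair
   (size of a derivation, interpretation) lexicographically. *)

section \<open>Environments\<close>

interpretation env_union: comm_monoid env_union env_empty
  by standard (simp_all add: env_union_def env_empty_def fun_eq_iff ac_simps)

definition env_le :: "env \<Rightarrow> env \<Rightarrow> bool" (infix "\<subseteq>\<^sub>e" 50) where
  "\<Gamma> \<subseteq>\<^sub>e \<Delta> \<longleftrightarrow> (\<forall>x. \<Gamma> x \<subseteq># \<Delta> x)"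

lemma env_union_apply: "(\<Gamma> \<and>\<^sub>e \<Delta>) x = \<Gamma> x + \<Delta> x"
  by (simp add: env_union_def)

lemma size_env_union: "size ((\<Gamma> \<and>\<^sub>e \<Delta>) x) = size (\<Gamma> x) + size (\<Delta> x)"
  by (simp add: env_union_def)

lemma env_le_refl [simp]: "\<Gamma> \<subseteq>\<^sub>e \<Gamma>"
  by (simp add: env_le_def)

lemma env_le_trans [trans]: "\<Gamma> \<subseteq>\<^sub>e \<Delta> \<Longrightarrow> \<Delta> \<subseteq>\<^sub>e \<Theta> \<Longrightarrow> \<Gamma> \<subseteq>\<^sub>e \<Theta>"
  unfolding env_le_def by (meson subset_mset.order_trans)

lemma env_union_mono: "\<Gamma> \<subseteq>\<^sub>e \<Gamma>' \<Longrightarrow> \<Delta> \<subseteq>\<^sub>e \<Delta>' \<Longrightarrow> \<Gamma> \<and>\<^sub>e \<Delta> \<subseteq>\<^sub>e \<Gamma>' \<and>\<^sub>e \<Delta>'"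
  by (simp add: env_le_def env_union_def subset_mset.add_mono)

lemma env_le_union_right [simp]: "\<Gamma> \<subseteq>\<^sub>e \<Gamma> \<and>\<^sub>e \<Delta>"
  by (simp add: env_le_def env_union_def)

lemma env_le_union_left [simp]: "\<Delta> \<subseteq>\<^sub>e \<Gamma> \<and>\<^sub>e \<Delta>"
  by (simp add: env_le_def env_union_def)

lemma env_empty_le [simp]: "env_empty \<subseteq>\<^sub>e \<Gamma>"
  by (simp add: env_le_def env_empty_def)

lemma env_le_unionD1: "\<Gamma> \<and>\<^sub>e \<Delta> \<subseteq>\<^sub>e \<Theta> \<Longrightarrow> \<Gamma> \<subseteq>\<^sub>e \<Theta>"
  using env_le_union_right env_le_trans by blast

lemma env_le_unionD2: "\<Gamma> \<and>\<^sub>e \<Delta> \<subseteq>\<^sub>e \<Theta> \<Longrightarrow> \<Delta> \<subseteq>\<^sub>e \<Theta>"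
  using env_le_union_left env_le_trans by blast

lemma env_ext_0 [simp]: "env_ext \<Gamma> M 0 = M"
  and env_ext_Suc [simp]: "env_ext \<Gamma> M (Suc x) = \<Gamma> x"
  by (simp_all add: env_ext_def)

lemma env_ext_union: "env_ext (\<Gamma> \<and>\<^sub>e \<Delta>) (M + N) = env_ext \<Gamma> M \<and>\<^sub>e env_ext \<Delta> N"
  by (rule ext) (simp add: env_ext_def env_union_def split: nat.split)

lemma env_ext_le: "\<Gamma> \<subseteq>\<^sub>e \<Delta> \<Longrightarrow> M \<subseteq># N \<Longrightarrow> env_ext \<Gamma> M \<subseteq>\<^sub>e env_ext \<Delta> N"
  by (simp add: env_le_def env_ext_def split: nat.split)

(* The environment counterparts of lift k and subst _ k _ *)
definition env_lift :: "nat \<Rightarrow> env \<Rightarrow> env" where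
  "env_lift k \<Gamma> = (\<lambda>x. if x < k then \<Gamma> x else if x = k then {#} else \<Gamma> (x - 1))"

definition env_drop :: "nat \<Rightarrow> env \<Rightarrow> env" where
  "env_drop k \<Gamma> = (\<lambda>x. if x < k then \<Gamma> x else \<Gamma> (Suc x))"

lemma env_lift_union: "env_lift k (\<Gamma> \<and>\<^sub>e \<Delta>) = env_lift k \<Gamma> \<and>\<^sub>e env_lift k \<Delta>"
  by (rule ext) (simp add: env_lift_def env_union_def)

lemma env_lift_le: "\<Gamma> \<subseteq>\<^sub>e \<Delta> \<Longrightarrow> env_lift k \<Gamma> \<subseteq>\<^sub>e env_lift k \<Delta>"
  by (simp add: env_le_def env_lift_def)

lemma env_lift_0: "env_lift 0 \<Gamma> = env_ext \<Gamma> {#}"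
  by (rule ext) (simp add: env_lift_def env_ext_def split: nat.split)

lemma env_ext_lift: "env_ext (env_lift k \<Gamma>) M = env_lift (Suc k) (env_ext \<Gamma> M)"
  by (rule ext) (simp add: env_lift_def env_ext_def split: nat.split)

lemma env_drop_union: "env_drop k (\<Gamma> \<and>\<^sub>e \<Delta>) = env_drop k \<Gamma> \<and>\<^sub>e env_drop k \<Delta>"
  by (rule ext) (simp add: env_drop_def env_union_def)

lemma env_drop_le: "\<Gamma> \<subseteq>\<^sub>e \<Delta> \<Longrightarrow> env_drop k \<Gamma> \<subseteq>\<^sub>e env_drop k \<Delta>"
  by (simp add: env_le_def env_drop_def)

lemma env_drop_0_ext [simp]: "env_drop 0 (env_ext \<Gamma> M) = \<Gamma>"
  by (rule ext) (simp add: env_drop_def)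

lemma env_drop_Suc_ext: "env_drop (Suc k) (env_ext \<Gamma> M) = env_ext (env_drop k \<Gamma>) M"
  by (rule ext) (simp add: env_drop_def env_ext_def split: nat.split)

lemma env_drop_Suc_ext_union:
  "env_drop (Suc k) (env_ext \<Gamma> M) \<and>\<^sub>e env_ext \<Delta> {#} = env_ext (env_drop k \<Gamma> \<and>\<^sub>e \<Delta>) M"
  using env_ext_union[of "env_drop k \<Gamma>" \<Delta> M "{#}"] by (simp add: env_drop_Suc_ext)

section \<open>Sized typing\<close>

lemma ch_nonempty [simp]: "ch M \<tau> \<noteq> {#}"
  by (simp add: ch_def)

lemma size_ch_pos [simp]: "0 < size (ch M \<tau>)"
  by (simp add: ch_def nonempty_has_size)

(* A list ps of pairs (M_i, \<tau>_i) encodes the premises of the application rule: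
   t : [M_i \<rightarrow> \<tau>_i], u : \<squnion> M_i and y : [\<tau>_i]. *)
abbreviation arrows :: "(ty multiset \<times> ty) list \<Rightarrow> ty multiset" where
  "arrows ps \<equiv> mset (map (\<lambda>(M, \<tau>). TArr M \<tau>) ps)"

abbreviation arrow_doms :: "(ty multiset \<times> ty) list \<Rightarrow> ty multiset" where
  "arrow_doms ps \<equiv> sum_list (map fst ps)"

abbreviation arrow_cods :: "(ty multiset \<times> ty) list \<Rightarrow> ty multiset" where
  "arrow_cods ps \<equiv> mset (map snd ps)"

(* The last argument is the size of the derivation. Environments need only contain the
   assumptions used, so weakening is admissible; subject reduction needs it when beta erases u. *)
inductive sized_typing :: "env \<Rightarrow> trm \<Rightarrow> ty \<Rightarrow> nat \<Rightarrow> bool"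
  and sized_mtyping :: "env \<Rightarrow> trm \<Rightarrow> ty multiset \<Rightarrow> nat \<Rightarrow> bool" where
  s_var: "\<sigma> \<in># \<Gamma> x \<Longrightarrow> sized_typing \<Gamma> (JVar x) \<sigma> 1"
| s_abs: "sized_typing (env_ext \<Gamma> M) t \<sigma> n \<Longrightarrow> sized_typing \<Gamma> (JLam t) (TArr M \<sigma>) (Suc n)"
| s_app: "\<lbrakk> sized_mtyping \<Gamma>1 t (ch (arrows ps) \<tau>1) n1;
           sized_mtyping \<Gamma>2 u (ch (arrow_doms ps) \<tau>2) n2;
           sized_typing (env_ext \<Gamma>3 (arrow_cods ps)) r \<sigma> n3;
           \<Gamma>1 \<and>\<^sub>e \<Gamma>2 \<and>\<^sub>e \<Gamma>3 \<subseteq>\<^sub>e \<Gamma> \<rbrakk>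
          \<Longrightarrow> sized_typing \<Gamma> (JApp t u r) \<sigma> (Suc (n1 + n2 + n3))"
| s_nil: "sized_mtyping \<Gamma> t {#} 0"
| s_add: "\<lbrakk> sized_mtyping \<Gamma>1 t M n1; sized_typing \<Gamma>2 t \<sigma> n2; \<Gamma>1 \<and>\<^sub>e \<Gamma>2 \<subseteq>\<^sub>e \<Gamma> \<rbrakk>
          \<Longrightarrow> sized_mtyping \<Gamma> t (add_mset \<sigma> M) (n1 + n2)"

inductive_cases sized_typing_JLamE: "sized_typing \<Gamma> (JLam t) \<sigma> n"

lemma sized_typing_JAppE:
  assumes "sized_typing \<Gamma> (JApp t u r) \<sigma> n"
  obtains \<Gamma>1 ps \<tau>1 n1 \<Gamma>2 \<tau>2 n2 \<Gamma>3 n3 where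
    "sized_mtyping \<Gamma>1 t (ch (arrows ps) \<tau>1) n1" "sized_mtyping \<Gamma>2 u (ch (arrow_doms ps) \<tau>2) n2"
    "sized_typing (env_ext \<Gamma>3 (arrow_cods ps)) r \<sigma> n3" "\<Gamma>1 \<and>\<^sub>e \<Gamma>2 \<and>\<^sub>e \<Gamma>3 \<subseteq>\<^sub>e \<Gamma>"
    "n = Suc (n1 + n2 + n3)"
  using assms by (cases rule: sized_typing.cases) blast+

lemma sized_mtyping_induct [consumes 1, case_names nil add]:
  assumes "sized_mtyping \<Gamma> t M n"
    and "\<And>\<Gamma>. P \<Gamma> {#} 0"
    and "\<And>\<Gamma>1 M n1 \<Gamma>2 \<sigma> n2 \<Gamma>. sized_mtyping \<Gamma>1 t M n1 \<Longrightarrow> P \<Gamma>1 M n1 \<Longrightarrow>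
           sized_typing \<Gamma>2 t \<sigma> n2 \<Longrightarrow> \<Gamma>1 \<and>\<^sub>e \<Gamma>2 \<subseteq>\<^sub>e \<Gamma> \<Longrightarrow> P \<Gamma> (add_mset \<sigma> M) (n1 + n2)"
  shows "P \<Gamma> M n"
proof -
  have "t = t \<longrightarrow> P \<Gamma> M n"
    using assms(1)
    by (induction rule: sized_typing_sized_mtyping.inducts(2)
          [where ?P1.0 = "\<lambda>_ _ _ _. True" and ?P2.0 = "\<lambda>\<Gamma> t' M n. t' = t \<longrightarrow> P \<Gamma> M n"])
       (auto intro: assms(2,3))
  then show ?thesis by simp
qed

lemma sized_typing_weaken:
  "sized_typing \<Gamma> t \<sigma> n \<Longrightarrow> \<Gamma> \<subseteq>\<^sub>e \<Gamma>' \<Longrightarrow> sized_typing \<Gamma>' t \<sigma> n"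
  "sized_mtyping \<Gamma> t M n \<Longrightarrow> \<Gamma> \<subseteq>\<^sub>e \<Gamma>' \<Longrightarrow> sized_mtyping \<Gamma>' t M n"
proof (induction arbitrary: \<Gamma>' and \<Gamma>' rule: sized_typing_sized_mtyping.inducts)
  case (s_var \<sigma> \<Gamma> x)
  then show ?case by (meson env_le_def mset_subset_eqD sized_typing_sized_mtyping.s_var)
next
  case (s_abs \<Gamma> M t \<sigma> n)
  then show ?case by (simp add: env_ext_le sized_typing_sized_mtyping.s_abs)
qed (meson env_le_trans env_le_refl sized_typing_sized_mtyping.intros)+

lemma sized_typing_pos: "sized_typing \<Gamma> t \<sigma> n \<Longrightarrow> 0 < n"
  by (cases rule: sized_typing.cases) auto

lemma sized_mtyping_size_le: "sized_mtyping \<Gamma> t M n \<Longrightarrow> size M \<le> n"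
  by (induction rule: sized_mtyping_induct) (auto dest: sized_typing_pos)

lemma sized_mtyping_single: "sized_mtyping \<Gamma> t {#\<sigma>#} n \<longleftrightarrow> sized_typing \<Gamma> t \<sigma> n"
proof
  assume "sized_mtyping \<Gamma> t {#\<sigma>#} n"
  then show "sized_typing \<Gamma> t \<sigma> n"
  proof (cases rule: sized_mtyping.cases)
    case (s_add \<Gamma>1 M n1 \<Gamma>2 \<sigma>' n2)
    then have "n1 = 0" by (auto elim: sized_mtyping.cases)
    with s_add show ?thesis by (auto intro: sized_typing_weaken env_le_unionD2)
  qed simp
next
  assume "sized_typing \<Gamma> t \<sigma> n"
  from s_add[OF s_nil[of env_empty] this env_le_refl] show "sized_mtyping \<Gamma> t {#\<sigma>#} n" by simp
qed

lemma sized_mtyping_ch: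
  assumes "sized_mtyping \<Gamma> u (ch M \<tau>) n"
  obtains n' where "sized_mtyping \<Gamma> u M n'" "n' \<le> n"
  using assms by (cases "M = {#}") (auto simp: ch_def intro: that s_nil)

lemma typing_imp_sized_typing:
  "typing \<Gamma> t \<sigma> \<Longrightarrow> \<exists>n. sized_typing \<Gamma> t \<sigma> n"
  "mtyping \<Gamma> t M \<Longrightarrow> \<exists>n. sized_mtyping \<Gamma> t M n"
proof (induction rule: typing_mtyping.inducts)
  case (t_var x \<sigma>)
  have "\<sigma> \<in># env_single x \<sigma> x" by (simp add: env_single_def)
  then show ?case by (blast intro: s_var)
next
  case (t_app \<Gamma> t ps \<tau>1 \<Delta> u \<tau>2 \<Lambda> r \<sigma>)
  then show ?case by (blast intro: s_app env_le_refl)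
next
  case (m_one \<Gamma> t \<sigma>)
  then show ?case by (auto simp: sized_mtyping_single)
next
  case (m_add \<Gamma> t M \<Delta> \<sigma>)
  then show ?case by (auto intro: s_add env_le_refl)
qed (blast intro: s_abs)

lemma sized_mtyping_union:
  assumes "sized_mtyping \<Gamma>1 t M n1" "sized_mtyping \<Gamma>2 t N n2"
  shows "sized_mtyping (\<Gamma>1 \<and>\<^sub>e \<Gamma>2) t (M + N) (n1 + n2)"
  using assms(2)
proof (induction rule: sized_mtyping_induct)
  case (nil \<Gamma>)
  show ?case using sized_typing_weaken(2)[OF assms(1) env_le_union_right] by simp
next
  case (add \<Gamma>a N na \<Gamma>b \<sigma> nb \<Gamma>)
  have "\<Gamma>1 \<and>\<^sub>e \<Gamma>a \<and>\<^sub>e \<Gamma>b \<subseteq>\<^sub>e \<Gamma>1 \<and>\<^sub>e \<Gamma>"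
    using env_union_mono[OF env_le_refl add.hyps(3)] by (simp add: env_union.assoc)
  from s_add[OF add.IH add.hyps(2) this] show ?case by (simp add: add.assoc)
qed

lemma sized_mtyping_split:
  assumes "sized_mtyping \<Gamma> t (M + N) n"
  obtains \<Gamma>1 \<Gamma>2 n1 n2 where "sized_mtyping \<Gamma>1 t M n1" "sized_mtyping \<Gamma>2 t N n2"
    "\<Gamma>1 \<and>\<^sub>e \<Gamma>2 \<subseteq>\<^sub>e \<Gamma>" "n = n1 + n2"
proof -
  have "\<exists>\<Gamma>1 \<Gamma>2 n1 n2. sized_mtyping \<Gamma>1 t M n1 \<and> sized_mtyping \<Gamma>2 t N n2
      \<and> \<Gamma>1 \<and>\<^sub>e \<Gamma>2 \<subseteq>\<^sub>e \<Gamma> \<and> n = n1 + n2"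
    if "sized_mtyping \<Gamma> t L n" "L = M + N" for L
    using that
  proof (induction arbitrary: M N rule: sized_mtyping_induct)
    case (nil \<Gamma>)
    then show ?case by (metis s_nil env_empty_le env_union.left_neutral add_0 empty_eq_union)
  next
    case (add \<Gamma>a L na \<Gamma>b \<sigma> nb \<Gamma>)
    show ?case
    proof (cases "\<sigma> \<in># M")
      case True
      then obtain M' where M: "M = add_mset \<sigma> M'" by (metis multi_member_split)
      with add.prems have "L = M' + N" by simp
      then obtain \<Gamma>1 \<Gamma>2 n1 n2 where IH: "sized_mtyping \<Gamma>1 t M' n1" "sized_mtyping \<Gamma>2 t N n2"
          "\<Gamma>1 \<and>\<^sub>e \<Gamma>2 \<subseteq>\<^sub>e \<Gamma>a" "na = n1 + n2"
        using add.IH[of M' N] by blast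
      have "\<Gamma>1 \<and>\<^sub>e \<Gamma>b \<and>\<^sub>e \<Gamma>2 \<subseteq>\<^sub>e \<Gamma>"
        using env_le_trans[OF env_union_mono[OF IH(3) env_le_refl] add.hyps(3)]
        by (simp add: ac_simps)
      with s_add[OF IH(1) add.hyps(2) env_le_refl] IH M show ?thesis by fastforce
    next
      case False
      then obtain N' where N: "N = add_mset \<sigma> N'"
        using add.prems by (metis multi_member_split union_iff union_single_eq_member)
      with add.prems have "L = M + N'" by simp
      then obtain \<Gamma>1 \<Gamma>2 n1 n2 where IH: "sized_mtyping \<Gamma>1 t M n1" "sized_mtyping \<Gamma>2 t N' n2"
          "\<Gamma>1 \<and>\<^sub>e \<Gamma>2 \<subseteq>\<^sub>e \<Gamma>a" "na = n1 + n2"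
        using add.IH[of M N'] by blast
      have "\<Gamma>1 \<and>\<^sub>e (\<Gamma>2 \<and>\<^sub>e \<Gamma>b) \<subseteq>\<^sub>e \<Gamma>"
        using env_le_trans[OF env_union_mono[OF IH(3) env_le_refl] add.hyps(3)]
        by (simp add: ac_simps)
      with s_add[OF IH(2) add.hyps(2) env_le_refl] IH N show ?thesis by fastforce
    qed
  qed
  with assms that show ?thesis by blast
qed

lemma sized_mtyping_add_mset:
  assumes "sized_mtyping \<Gamma> t (add_mset \<sigma> M) n"
  obtains \<Gamma>1 \<Gamma>2 n1 n2 where "sized_typing \<Gamma>1 t \<sigma> n1" "sized_mtyping \<Gamma>2 t M n2"
    "\<Gamma>1 \<and>\<^sub>e \<Gamma>2 \<subseteq>\<^sub>e \<Gamma>" "n = n1 + n2"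
proof -
  from assms have "sized_mtyping \<Gamma> t ({#\<sigma>#} + M) n" by simp
  then show ?thesis by (rule sized_mtyping_split) (auto simp: sized_mtyping_single intro: that)
qed

lemma sized_mtyping_restrict:
  assumes "sized_mtyping \<Delta> s M m" "N \<subseteq># M"
  obtains m' where "sized_mtyping \<Delta> s N m'" "m' + size M \<le> m + size N"
proof -
  obtain X where X: "M = N + X" using assms(2) by (metis subset_mset.le_iff_add)
  with assms(1) obtain \<Delta>1 \<Delta>2 m1 m2 where "sized_mtyping \<Delta>1 s N m1" "sized_mtyping \<Delta>2 s X m2"
      "\<Delta>1 \<and>\<^sub>e \<Delta>2 \<subseteq>\<^sub>e \<Delta>" "m = m1 + m2"
    by (auto elim: sized_mtyping_split)
  moreover from \<open>sized_mtyping \<Delta>2 s X m2\<close> have "size X \<le> m2" by (rule sized_mtyping_size_le)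
  ultimately show ?thesis
    using X by (intro that[of m1]) (auto intro: sized_typing_weaken(2) env_le_unionD1)
qed

lemma sized_mtyping_split_env:
  assumes "sized_mtyping \<Delta> s (\<Gamma> k) m" "\<Gamma>1 \<and>\<^sub>e \<Gamma>2 \<subseteq>\<^sub>e \<Gamma>"
  obtains \<Delta>1 \<Delta>2 m1 m2 where "sized_mtyping \<Delta>1 s (\<Gamma>1 k) m1" "sized_mtyping \<Delta>2 s (\<Gamma>2 k) m2"
    "\<Delta>1 \<and>\<^sub>e \<Delta>2 \<subseteq>\<^sub>e \<Delta>" "m1 + m2 + size (\<Gamma> k) \<le> m + size (\<Gamma>1 k) + size (\<Gamma>2 k)"
proof -
  have "\<Gamma>1 k + \<Gamma>2 k \<subseteq># \<Gamma> k" using assms(2) by (simp add: env_le_def env_union_apply)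
  with assms(1) obtain m' where "sized_mtyping \<Delta> s (\<Gamma>1 k + \<Gamma>2 k) m'"
      "m' + size (\<Gamma> k) \<le> m + size (\<Gamma>1 k + \<Gamma>2 k)"
    by (rule sized_mtyping_restrict)
  then show ?thesis by (auto elim!: sized_mtyping_split intro: that)
qed

lemma sized_mtyping_split_env3:
  assumes "sized_mtyping \<Delta> s (\<Gamma> k) m" "\<Gamma>1 \<and>\<^sub>e \<Gamma>2 \<and>\<^sub>e \<Gamma>3 \<subseteq>\<^sub>e \<Gamma>"
  obtains \<Delta>1 \<Delta>2 \<Delta>3 m1 m2 m3 where "sized_mtyping \<Delta>1 s (\<Gamma>1 k) m1" "sized_mtyping \<Delta>2 s (\<Gamma>2 k) m2"
    "sized_mtyping \<Delta>3 s (\<Gamma>3 k) m3" "\<Delta>1 \<and>\<^sub>e \<Delta>2 \<and>\<^sub>e \<Delta>3 \<subseteq>\<^sub>e \<Delta>"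
    "m1 + m2 + m3 + size (\<Gamma> k) \<le> m + size (\<Gamma>1 k) + size (\<Gamma>2 k) + size (\<Gamma>3 k)"
proof -
  from assms obtain \<Delta>12 \<Delta>3 m12 m3 where d12: "sized_mtyping \<Delta>12 s ((\<Gamma>1 \<and>\<^sub>e \<Gamma>2) k) m12"
      and d3: "sized_mtyping \<Delta>3 s (\<Gamma>3 k) m3" and "\<Delta>12 \<and>\<^sub>e \<Delta>3 \<subseteq>\<^sub>e \<Delta>"
      and m: "m12 + m3 + size (\<Gamma> k) \<le> m + size ((\<Gamma>1 \<and>\<^sub>e \<Gamma>2) k) + size (\<Gamma>3 k)"
    by (rule sized_mtyping_split_env)
  from d12 obtain \<Delta>1 \<Delta>2 m1 m2 where "sized_mtyping \<Delta>1 s (\<Gamma>1 k) m1" "sized_mtyping \<Delta>2 s (\<Gamma>2 k) m2"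
      "\<Delta>1 \<and>\<^sub>e \<Delta>2 \<subseteq>\<^sub>e \<Delta>12" "m12 = m1 + m2"
    by (auto simp: env_union_apply elim: sized_mtyping_split)
  moreover from \<open>\<Delta>1 \<and>\<^sub>e \<Delta>2 \<subseteq>\<^sub>e \<Delta>12\<close> \<open>\<Delta>12 \<and>\<^sub>e \<Delta>3 \<subseteq>\<^sub>e \<Delta>\<close> have "\<Delta>1 \<and>\<^sub>e \<Delta>2 \<and>\<^sub>e \<Delta>3 \<subseteq>\<^sub>e \<Delta>"
    by (meson env_le_refl env_le_trans env_union_mono)
  ultimately show ?thesis
    using that d3 m by (simp add: size_env_union)
qed

section \<open>Substitution\<close>

lemma sized_typing_lift:
  "sized_typing \<Gamma> s \<sigma> n \<Longrightarrow> sized_typing (env_lift k \<Gamma>) (lift k s) \<sigma> n"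
  "sized_mtyping \<Gamma> s M n \<Longrightarrow> sized_mtyping (env_lift k \<Gamma>) (lift k s) M n"
proof (induction arbitrary: k and k rule: sized_typing_sized_mtyping.inducts)
  case (s_var \<sigma> \<Gamma> x)
  then show ?case
    using sized_typing_sized_mtyping.s_var[of \<sigma> "env_lift k \<Gamma>" x]
      sized_typing_sized_mtyping.s_var[of \<sigma> "env_lift k \<Gamma>" "Suc x"]
    by (simp add: env_lift_def)
next
  case (s_abs \<Gamma> M t \<sigma> n)
  then show ?case
    using s_abs.IH[of "Suc k"] by (auto simp: env_ext_lift intro: sized_typing_sized_mtyping.s_abs)
next
  case (s_app \<Gamma>1 t ps \<tau>1 n1 \<Gamma>2 u \<tau>2 n2 \<Gamma>3 r \<sigma> n3 \<Gamma>)
  have "env_lift k \<Gamma>1 \<and>\<^sub>e env_lift k \<Gamma>2 \<and>\<^sub>e env_lift k \<Gamma>3 \<subseteq>\<^sub>e env_lift k \<Gamma>"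
    using env_lift_le[OF s_app.hyps(4)] by (simp add: env_lift_union)
  from sized_typing_sized_mtyping.s_app[OF s_app.IH(1,2) _ this] s_app.IH(3)[of "Suc k"]
  show ?case by (simp add: env_ext_lift)
next
  case (s_add \<Gamma>1 t M n1 \<Gamma>2 \<sigma> n2 \<Gamma>)
  have "env_lift k \<Gamma>1 \<and>\<^sub>e env_lift k \<Gamma>2 \<subseteq>\<^sub>e env_lift k \<Gamma>"
    using env_lift_le[OF s_add.hyps(3)] by (simp add: env_lift_union)
  with s_add.IH show ?case by (auto intro: sized_typing_sized_mtyping.s_add)
qed (rule s_nil)

lemma sized_mtyping_lift0:
  "sized_mtyping \<Gamma> s M n \<Longrightarrow> sized_mtyping (env_ext \<Gamma> {#}) (lift 0 s) M n"
  using sized_typing_lift(2)[of \<Gamma> s M n 0] by (simp add: env_lift_0)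

lemma sized_typing_subst_JVar:
  assumes "\<sigma> \<in># \<Gamma> x" "sized_mtyping \<Delta> s (\<Gamma> k) m"
  shows "\<exists>n'. sized_typing (env_drop k \<Gamma> \<and>\<^sub>e \<Delta>) (subst (JVar x) k s) \<sigma> n'
    \<and> n' + size (\<Gamma> k) \<le> 1 + m"
proof (cases x k rule: linorder_cases)
  case equal
  with assms(1) have "{#\<sigma>#} \<subseteq># \<Gamma> k" by simp
  with assms(2) obtain m' where "sized_mtyping \<Delta> s {#\<sigma>#} m'" "m' + size (\<Gamma> k) \<le> m + 1"
    by (metis sized_mtyping_restrict size_single)
  with equal show ?thesis
    by (auto simp: sized_mtyping_single intro: sized_typing_weaken(1)[OF _ env_le_union_left])
next
  case less
  then have "\<sigma> \<in># (env_drop k \<Gamma> \<and>\<^sub>e \<Delta>) x"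
    using assms(1) by (simp add: env_drop_def env_union_apply)
  with less sized_mtyping_size_le[OF assms(2)] show ?thesis
    by (auto intro: s_var)
next
  case greater
  then have "\<sigma> \<in># (env_drop k \<Gamma> \<and>\<^sub>e \<Delta>) (x - 1)"
    using assms(1) by (cases x) (simp_all add: env_drop_def env_union_apply)
  with greater sized_mtyping_size_le[OF assms(2)] show ?thesis
    by (auto intro: s_var)
qed

(* Each of the size (\<Gamma> k) axioms for the variable k is replaced by one derivation for s. *)
lemma sized_typing_subst:
  "sized_typing \<Gamma> t \<sigma> n \<Longrightarrow> sized_mtyping \<Delta> s (\<Gamma> k) m \<Longrightarrow>
     \<exists>n'. sized_typing (env_drop k \<Gamma> \<and>\<^sub>e \<Delta>) (subst t k s) \<sigma> n' \<and> n' + size (\<Gamma> k) \<le> n + m"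
  "sized_mtyping \<Gamma> t A n \<Longrightarrow> sized_mtyping \<Delta> s (\<Gamma> k) m \<Longrightarrow>
     \<exists>n'. sized_mtyping (env_drop k \<Gamma> \<and>\<^sub>e \<Delta>) (subst t k s) A n' \<and> n' + size (\<Gamma> k) \<le> n + m"
proof (induction arbitrary: k \<Delta> s m and k \<Delta> s m rule: sized_typing_sized_mtyping.inducts)
  case (s_var \<sigma> \<Gamma> x)
  then show ?case by (rule sized_typing_subst_JVar)
next
  case (s_abs \<Gamma> M t \<sigma> n)
  have "sized_mtyping (env_ext \<Delta> {#}) (lift 0 s) (env_ext \<Gamma> M (Suc k)) m"
    using sized_mtyping_lift0[OF s_abs.prems] by simp
  with s_abs.IH show ?case
    by (fastforce simp: env_drop_Suc_ext_union intro: sized_typing_sized_mtyping.s_abs)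
next
  case (s_app \<Gamma>1 t ps \<tau>1 n1 \<Gamma>2 u \<tau>2 n2 \<Gamma>3 r \<sigma> n3 \<Gamma>)
  from s_app.prems s_app.hyps(4) obtain \<Delta>1 \<Delta>2 \<Delta>3 m1 m2 m3 where
    d: "sized_mtyping \<Delta>1 s (\<Gamma>1 k) m1" "sized_mtyping \<Delta>2 s (\<Gamma>2 k) m2" "sized_mtyping \<Delta>3 s (\<Gamma>3 k) m3"
    and "\<Delta>1 \<and>\<^sub>e \<Delta>2 \<and>\<^sub>e \<Delta>3 \<subseteq>\<^sub>e \<Delta>"
    and m: "m1 + m2 + m3 + size (\<Gamma> k) \<le> m + size (\<Gamma>1 k) + size (\<Gamma>2 k) + size (\<Gamma>3 k)"
    by (rule sized_mtyping_split_env3)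
  have "sized_mtyping (env_ext \<Delta>3 {#}) (lift 0 s) (env_ext \<Gamma>3 (arrow_cods ps) (Suc k)) m3"
    using sized_mtyping_lift0[OF d(3)] by simp
  from s_app.IH(1)[OF d(1)] s_app.IH(2)[OF d(2)] s_app.IH(3)[OF this] obtain n1' n2' n3' where
    "sized_mtyping (env_drop k \<Gamma>1 \<and>\<^sub>e \<Delta>1) (subst t k s) (ch (arrows ps) \<tau>1) n1'"
    "sized_mtyping (env_drop k \<Gamma>2 \<and>\<^sub>e \<Delta>2) (subst u k s) (ch (arrow_doms ps) \<tau>2) n2'"
    "sized_typing (env_ext (env_drop k \<Gamma>3 \<and>\<^sub>e \<Delta>3) (arrow_cods ps))
      (subst r (Suc k) (lift 0 s)) \<sigma> n3'"
    "n1' + size (\<Gamma>1 k) \<le> n1 + m1" "n2' + size (\<Gamma>2 k) \<le> n2 + m2" "n3' + size (\<Gamma>3 k) \<le> n3 + m3"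
    by (simp only: env_ext_Suc env_drop_Suc_ext_union) blast
  moreover have "(env_drop k \<Gamma>1 \<and>\<^sub>e \<Delta>1) \<and>\<^sub>e (env_drop k \<Gamma>2 \<and>\<^sub>e \<Delta>2) \<and>\<^sub>e (env_drop k \<Gamma>3 \<and>\<^sub>e \<Delta>3)
      \<subseteq>\<^sub>e env_drop k \<Gamma> \<and>\<^sub>e \<Delta>"
    using env_union_mono[OF env_drop_le[OF s_app.hyps(4)] \<open>\<Delta>1 \<and>\<^sub>e \<Delta>2 \<and>\<^sub>e \<Delta>3 \<subseteq>\<^sub>e \<Delta>\<close>, of k]
    by (simp add: env_drop_union ac_simps)
  ultimately show ?case
    using m by (intro exI[of _ "Suc (n1' + n2' + n3')"])
      (simp add: sized_typing_sized_mtyping.s_app)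
next
  case (s_nil \<Gamma> t)
  then show ?case using sized_mtyping_size_le by (auto intro: sized_typing_sized_mtyping.s_nil)
next
  case (s_add \<Gamma>1 t M n1 \<Gamma>2 \<sigma> n2 \<Gamma>)
  from s_add.prems s_add.hyps(3) obtain \<Delta>1 \<Delta>2 m1 m2 where
    d1: "sized_mtyping \<Delta>1 s (\<Gamma>1 k) m1" and d2: "sized_mtyping \<Delta>2 s (\<Gamma>2 k) m2"
    and "\<Delta>1 \<and>\<^sub>e \<Delta>2 \<subseteq>\<^sub>e \<Delta>" "m1 + m2 + size (\<Gamma> k) \<le> m + size (\<Gamma>1 k) + size (\<Gamma>2 k)"
    by (rule sized_mtyping_split_env)
  from s_add.IH(1)[OF d1] s_add.IH(2)[OF d2] obtain n1' n2' where
    "sized_mtyping (env_drop k \<Gamma>1 \<and>\<^sub>e \<Delta>1) (subst t k s) M n1'" "n1' + size (\<Gamma>1 k) \<le> n1 + m1"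
    "sized_typing (env_drop k \<Gamma>2 \<and>\<^sub>e \<Delta>2) (subst t k s) \<sigma> n2'" "n2' + size (\<Gamma>2 k) \<le> n2 + m2"
    by blast
  moreover have "(env_drop k \<Gamma>1 \<and>\<^sub>e \<Delta>1) \<and>\<^sub>e (env_drop k \<Gamma>2 \<and>\<^sub>e \<Delta>2) \<subseteq>\<^sub>e env_drop k \<Gamma> \<and>\<^sub>e \<Delta>"
    using env_union_mono[OF env_drop_le[OF s_add.hyps(3)] \<open>\<Delta>1 \<and>\<^sub>e \<Delta>2 \<subseteq>\<^sub>e \<Delta>\<close>, of k]
    by (simp add: env_drop_union ac_simps)
  ultimately show ?case using \<open>m1 + m2 + size (\<Gamma> k) \<le> _\<close>
    by (intro exI[of _ "n1' + n2'"]) (auto intro: sized_typing_sized_mtyping.s_add)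
qed

section \<open>Weight decrease along beta and pi\<close>

definition weight_decreases :: "nat \<Rightarrow> trm \<Rightarrow> trm \<Rightarrow> bool" where
  "weight_decreases d t t' \<longleftrightarrow>
     (\<forall>\<Gamma> \<sigma> n. sized_typing \<Gamma> t \<sigma> n \<longrightarrow> (\<exists>n'. sized_typing \<Gamma> t' \<sigma> n' \<and> n' + d \<le> n))"

lemma weight_decreases_mtyping:
  assumes "weight_decreases d t t'" "sized_mtyping \<Gamma> t M n"
  obtains n' where "sized_mtyping \<Gamma> t' M n'" "n' + d * size M \<le> n"
proof -
  from assms(2) have "\<exists>n'. sized_mtyping \<Gamma> t' M n' \<and> n' + d * size M \<le> n"
  proof (induction rule: sized_mtyping_induct)
    case (nil \<Gamma>)
    then show ?case by (auto intro: s_nil)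
  next
    case (add \<Gamma>1 M n1 \<Gamma>2 \<sigma> n2 \<Gamma>)
    with assms(1) obtain n1' n2' where "sized_mtyping \<Gamma>1 t' M n1'" "n1' + d * size M \<le> n1"
        "sized_typing \<Gamma>2 t' \<sigma> n2'" "n2' + d \<le> n2"
      unfolding weight_decreases_def by blast
    with s_add[of \<Gamma>1 t' M n1' \<Gamma>2 \<sigma> n2' \<Gamma>] add.hyps(3) show ?case
      by (intro exI[of _ "n1' + n2'"]) simp
  qed
  with that show ?thesis by blast
qed

lemma weight_decreases_mtyping_ch:
  assumes "weight_decreases d t t'" "sized_mtyping \<Gamma> t (ch M \<tau>) n"
  obtains n' where "sized_mtyping \<Gamma> t' (ch M \<tau>) n'" "n' + d \<le> n"
proof -
  obtain n' where n': "sized_mtyping \<Gamma> t' (ch M \<tau>) n'" "n' + d * size (ch M \<tau>) \<le> n"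
    using assms by (rule weight_decreases_mtyping)
  have "d \<le> d * size (ch M \<tau>)"
    using size_ch_pos[of M \<tau>] by (simp add: Suc_le_eq)
  with n'(2) have "n' + d \<le> n" by linarith
  with n'(1) show ?thesis by (rule that)
qed

lemma weight_decreases_JLam:
  "weight_decreases d t t' \<Longrightarrow> weight_decreases d (JLam t) (JLam t')"
  unfolding weight_decreases_def
  by (metis Suc_le_mono add_Suc sized_typing_JLamE s_abs)

lemma weight_decreases_JApp1:
  assumes "weight_decreases d t t'"
  shows "weight_decreases d (JApp t u r) (JApp t' u r)"
  unfolding weight_decreases_def
proof (intro allI impI)
  fix \<Gamma> \<sigma> n
  assume "sized_typing \<Gamma> (JApp t u r) \<sigma> n"
  then obtain \<Gamma>1 ps \<tau>1 n1 \<Gamma>2 \<tau>2 n2 \<Gamma>3 n3 where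
    t: "sized_mtyping \<Gamma>1 t (ch (arrows ps) \<tau>1) n1" and
    rest: "sized_mtyping \<Gamma>2 u (ch (arrow_doms ps) \<tau>2) n2"
      "sized_typing (env_ext \<Gamma>3 (arrow_cods ps)) r \<sigma> n3" "\<Gamma>1 \<and>\<^sub>e \<Gamma>2 \<and>\<^sub>e \<Gamma>3 \<subseteq>\<^sub>e \<Gamma>"
    and n: "n = Suc (n1 + n2 + n3)"
    by (rule sized_typing_JAppE)
  from assms t obtain n1' where t': "sized_mtyping \<Gamma>1 t' (ch (arrows ps) \<tau>1) n1'" "n1' + d \<le> n1"
    by (rule weight_decreases_mtyping_ch)
  from s_app[OF t'(1) rest] t'(2) n show "\<exists>n'. sized_typing \<Gamma> (JApp t' u r) \<sigma> n' \<and> n' + d \<le> n"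
    by (intro exI[of _ "Suc (n1' + n2 + n3)"]) simp
qed

lemma weight_decreases_JApp2:
  assumes "weight_decreases d u u'"
  shows "weight_decreases d (JApp t u r) (JApp t u' r)"
  unfolding weight_decreases_def
proof (intro allI impI)
  fix \<Gamma> \<sigma> n
  assume "sized_typing \<Gamma> (JApp t u r) \<sigma> n"
  then obtain \<Gamma>1 ps \<tau>1 n1 \<Gamma>2 \<tau>2 n2 \<Gamma>3 n3 where
    t: "sized_mtyping \<Gamma>1 t (ch (arrows ps) \<tau>1) n1" and
    u: "sized_mtyping \<Gamma>2 u (ch (arrow_doms ps) \<tau>2) n2" and
    r: "sized_typing (env_ext \<Gamma>3 (arrow_cods ps)) r \<sigma> n3" and
    env: "\<Gamma>1 \<and>\<^sub>e \<Gamma>2 \<and>\<^sub>e \<Gamma>3 \<subseteq>\<^sub>e \<Gamma>" and n: "n = Suc (n1 + n2 + n3)"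
    by (rule sized_typing_JAppE)
  from assms u obtain n2' where u': "sized_mtyping \<Gamma>2 u' (ch (arrow_doms ps) \<tau>2) n2'" "n2' + d \<le> n2"
    by (rule weight_decreases_mtyping_ch)
  from s_app[OF t u'(1) r env] u'(2) n show "\<exists>n'. sized_typing \<Gamma> (JApp t u' r) \<sigma> n' \<and> n' + d \<le> n"
    by (intro exI[of _ "Suc (n1 + n2' + n3)"]) simp
qed

lemma weight_decreases_JApp3:
  assumes "weight_decreases d r r'"
  shows "weight_decreases d (JApp t u r) (JApp t u r')"
  unfolding weight_decreases_def
proof (intro allI impI)
  fix \<Gamma> \<sigma> n
  assume "sized_typing \<Gamma> (JApp t u r) \<sigma> n"
  then obtain \<Gamma>1 ps \<tau>1 n1 \<Gamma>2 \<tau>2 n2 \<Gamma>3 n3 where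
    t: "sized_mtyping \<Gamma>1 t (ch (arrows ps) \<tau>1) n1" and
    u: "sized_mtyping \<Gamma>2 u (ch (arrow_doms ps) \<tau>2) n2" and
    r: "sized_typing (env_ext \<Gamma>3 (arrow_cods ps)) r \<sigma> n3" and
    env: "\<Gamma>1 \<and>\<^sub>e \<Gamma>2 \<and>\<^sub>e \<Gamma>3 \<subseteq>\<^sub>e \<Gamma>" and n: "n = Suc (n1 + n2 + n3)"
    by (rule sized_typing_JAppE)
  from assms r obtain n3' where
    r': "sized_typing (env_ext \<Gamma>3 (arrow_cods ps)) r' \<sigma> n3'" "n3' + d \<le> n3"
    unfolding weight_decreases_def by blast
  from s_app[OF t u r'(1) env] r'(2) n show "\<exists>n'. sized_typing \<Gamma> (JApp t u r') \<sigma> n' \<and> n' + d \<le> n"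
    by (intro exI[of _ "Suc (n1 + n2 + n3')"]) simp
qed

lemma sized_mtyping_subst_abs:
  assumes "sized_mtyping \<Gamma>1 (JLam t) (arrows ps) n1" "sized_mtyping \<Gamma>2 u (arrow_doms ps) n2"
  obtains \<Gamma>' n' where "sized_mtyping \<Gamma>' (subst t 0 u) (arrow_cods ps) n'" "\<Gamma>' \<subseteq>\<^sub>e \<Gamma>1 \<and>\<^sub>e \<Gamma>2"
    "n' + length ps \<le> n1 + n2"
proof -
  from assms have "\<exists>\<Gamma>' n'. sized_mtyping \<Gamma>' (subst t 0 u) (arrow_cods ps) n' \<and> \<Gamma>' \<subseteq>\<^sub>e \<Gamma>1 \<and>\<^sub>e \<Gamma>2
    \<and> n' + length ps \<le> n1 + n2"
  proof (induction ps arbitrary: \<Gamma>1 n1 \<Gamma>2 n2)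
    case Nil
    show ?case by (intro exI[of _ env_empty] exI[of _ 0]) (simp add: s_nil)
  next
    case (Cons p ps)
    obtain M \<tau> where p: "p = (M, \<tau>)" by fastforce
    from Cons.prems(1) p
    have "sized_mtyping \<Gamma>1 (JLam t) (add_mset (TArr M \<tau>) (arrows ps)) n1" by simp
    then obtain \<Gamma>a \<Gamma>b n0 nb where
      t: "sized_typing (env_ext \<Gamma>a M) t \<tau> n0" and ts: "sized_mtyping \<Gamma>b (JLam t) (arrows ps) nb"
      and "\<Gamma>a \<and>\<^sub>e \<Gamma>b \<subseteq>\<^sub>e \<Gamma>1" "n1 = Suc n0 + nb"
      by (elim sized_mtyping_add_mset sized_typing_JLamE) auto
    from Cons.prems(2) p have "sized_mtyping \<Gamma>2 u (M + arrow_doms ps) n2" by simp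
    then obtain \<Delta>1 \<Delta>2 m1 m2 where
      u: "sized_mtyping \<Delta>1 u M m1" and us: "sized_mtyping \<Delta>2 u (arrow_doms ps) m2"
      and "\<Delta>1 \<and>\<^sub>e \<Delta>2 \<subseteq>\<^sub>e \<Gamma>2" "n2 = m1 + m2"
      by (rule sized_mtyping_split)
    from sized_typing_subst(1)[OF t, of \<Delta>1 u 0 m1] u obtain n0' where
      t': "sized_typing (\<Gamma>a \<and>\<^sub>e \<Delta>1) (subst t 0 u) \<tau> n0'" "n0' \<le> n0 + m1"
      by auto
    from Cons.IH[OF ts us] obtain \<Gamma>'' nr where
      ts': "sized_mtyping \<Gamma>'' (subst t 0 u) (arrow_cods ps) nr" "\<Gamma>'' \<subseteq>\<^sub>e \<Gamma>b \<and>\<^sub>e \<Delta>2"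
      "nr + length ps \<le> nb + m2"
      by blast
    have "\<Gamma>'' \<and>\<^sub>e (\<Gamma>a \<and>\<^sub>e \<Delta>1) \<subseteq>\<^sub>e (\<Gamma>a \<and>\<^sub>e \<Gamma>b) \<and>\<^sub>e (\<Delta>1 \<and>\<^sub>e \<Delta>2)"
      using env_union_mono[OF ts'(2) env_le_refl[of "\<Gamma>a \<and>\<^sub>e \<Delta>1"]] by (simp add: ac_simps)
    also have "\<dots> \<subseteq>\<^sub>e \<Gamma>1 \<and>\<^sub>e \<Gamma>2"
      using \<open>\<Gamma>a \<and>\<^sub>e \<Gamma>b \<subseteq>\<^sub>e \<Gamma>1\<close> \<open>\<Delta>1 \<and>\<^sub>e \<Delta>2 \<subseteq>\<^sub>e \<Gamma>2\<close> by (rule env_union_mono)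
    finally have "\<Gamma>'' \<and>\<^sub>e (\<Gamma>a \<and>\<^sub>e \<Delta>1) \<subseteq>\<^sub>e \<Gamma>1 \<and>\<^sub>e \<Gamma>2" .
    with s_add[OF ts'(1) t'(1) env_le_refl] show ?case
      using p t'(2) ts'(3) \<open>n1 = Suc n0 + nb\<close> \<open>n2 = m1 + m2\<close>
      by (intro exI[of _ "\<Gamma>'' \<and>\<^sub>e (\<Gamma>a \<and>\<^sub>e \<Delta>1)"] exI[of _ "nr + n0'"]) simp
  qed
  with that show ?thesis by blast
qed

lemma weight_decreases_beta_root:
  "weight_decreases 1 (JApp (JLam t) u r) (subst r 0 (subst t 0 u))"
  unfolding weight_decreases_def
proof (intro allI impI)
  fix \<Gamma> \<sigma> n
  assume "sized_typing \<Gamma> (JApp (JLam t) u r) \<sigma> n"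
  then obtain \<Gamma>1 ps \<tau>1 n1 \<Gamma>2 \<tau>2 n2 \<Gamma>3 n3 where
    t: "sized_mtyping \<Gamma>1 (JLam t) (ch (arrows ps) \<tau>1) n1" and
    u: "sized_mtyping \<Gamma>2 u (ch (arrow_doms ps) \<tau>2) n2" and
    r: "sized_typing (env_ext \<Gamma>3 (arrow_cods ps)) r \<sigma> n3" and
    env: "\<Gamma>1 \<and>\<^sub>e \<Gamma>2 \<and>\<^sub>e \<Gamma>3 \<subseteq>\<^sub>e \<Gamma>" and n: "n = Suc (n1 + n2 + n3)"
    by (rule sized_typing_JAppE)
  show "\<exists>n'. sized_typing \<Gamma> (subst r 0 (subst t 0 u)) \<sigma> n' \<and> n' + 1 \<le> n"
  proof (cases "ps = []")
    case True
    with sized_typing_subst(1)[OF r, of env_empty "subst t 0 u" 0 0] obtain n' where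
      "sized_typing \<Gamma>3 (subst r 0 (subst t 0 u)) \<sigma> n'" "n' \<le> n3"
      by (auto intro: s_nil)
    moreover have "\<Gamma>3 \<subseteq>\<^sub>e \<Gamma>" using env by (rule env_le_unionD2)
    ultimately show ?thesis using n by (auto intro: sized_typing_weaken(1))
  next
    case False
    with t have t': "sized_mtyping \<Gamma>1 (JLam t) (arrows ps) n1" by (simp add: ch_def)
    from u obtain n2' where u': "sized_mtyping \<Gamma>2 u (arrow_doms ps) n2'" "n2' \<le> n2"
      by (rule sized_mtyping_ch)
    from t' u'(1) obtain \<Gamma>' m where
      tu: "sized_mtyping \<Gamma>' (subst t 0 u) (arrow_cods ps) m" "\<Gamma>' \<subseteq>\<^sub>e \<Gamma>1 \<and>\<^sub>e \<Gamma>2"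
        "m + length ps \<le> n1 + n2'"
      by (rule sized_mtyping_subst_abs)
    from sized_typing_subst(1)[OF r, of \<Gamma>' "subst t 0 u" 0 m] tu(1) obtain n' where
      "sized_typing (\<Gamma>3 \<and>\<^sub>e \<Gamma>') (subst r 0 (subst t 0 u)) \<sigma> n'" "n' + length ps \<le> n3 + m"
      by auto
    moreover have "\<Gamma>3 \<and>\<^sub>e \<Gamma>' \<subseteq>\<^sub>e \<Gamma>1 \<and>\<^sub>e \<Gamma>2 \<and>\<^sub>e \<Gamma>3"
      using env_union_mono[OF tu(2) env_le_refl[of \<Gamma>3]] by (simp add: ac_simps)
    with env have "\<Gamma>3 \<and>\<^sub>e \<Gamma>' \<subseteq>\<^sub>e \<Gamma>" by (rule env_le_trans[rotated])
    ultimately show ?thesis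
      using n tu(3) u'(2) False by (auto intro: sized_typing_weaken(1) simp: neq_Nil_conv)
  qed
qed

lemma beta_weight_decreases: "beta t t' \<Longrightarrow> weight_decreases 1 t t'"
  by (induction rule: beta.induct)
     (blast intro: weight_decreases_beta_root weight_decreases_JLam
        weight_decreases_JApp1 weight_decreases_JApp2 weight_decreases_JApp3)+

lemma sized_mtyping_ch_union:
  assumes "sized_mtyping \<Gamma>1 t (ch M1 \<tau>1) n1" "sized_mtyping \<Gamma>2 t (ch M2 \<tau>2) n2"
  obtains \<tau> n where "sized_mtyping (\<Gamma>1 \<and>\<^sub>e \<Gamma>2) t (ch (M1 + M2) \<tau>) n" "n \<le> n1 + n2"
proof -
  have t1: "sized_mtyping (\<Gamma>1 \<and>\<^sub>e \<Gamma>2) t (ch M1 \<tau>1) n1"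
    using assms(1) env_le_union_right by (rule sized_typing_weaken(2))
  have t2: "sized_mtyping (\<Gamma>1 \<and>\<^sub>e \<Gamma>2) t (ch M2 \<tau>2) n2"
    using assms(2) env_le_union_left by (rule sized_typing_weaken(2))
  consider "M1 = {#}" | "M2 = {#}" | "M1 \<noteq> {#}" "M2 \<noteq> {#}" by blast
  then show ?thesis
  proof cases
    case 1
    with t2 show ?thesis by (intro that[of \<tau>2 n2]) simp_all
  next
    case 2
    with t1 show ?thesis by (intro that[of \<tau>1 n1]) simp_all
  next
    case 3
    with sized_mtyping_union[OF assms] show ?thesis
      by (intro that[of \<tau>1 "n1 + n2"]) (simp_all add: ch_def)
  qed
qed

(* All typings of JApp t u r merged into one instance of the application rule whose body r
   receives the whole multiset R; this is how the pi-contractum gets typed. *)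
definition app_mtyping :: "env \<Rightarrow> trm \<Rightarrow> trm \<Rightarrow> trm \<Rightarrow> ty multiset \<Rightarrow> nat \<Rightarrow> bool" where
  "app_mtyping \<Gamma> t u r R n \<longleftrightarrow> (\<exists>ps \<tau>t \<tau>u \<Gamma>t \<Gamma>u \<Gamma>r nt nu nr.
     sized_mtyping \<Gamma>t t (ch (arrows ps) \<tau>t) nt \<and> sized_mtyping \<Gamma>u u (ch (arrow_doms ps) \<tau>u) nu \<and>
     sized_mtyping (env_ext \<Gamma>r (arrow_cods ps)) r R nr \<and> \<Gamma>t \<and>\<^sub>e \<Gamma>u \<and>\<^sub>e \<Gamma>r \<subseteq>\<^sub>e \<Gamma> \<and>
     nt + nu + nr + 1 \<le> n)"

lemma app_mtyping_single:
  assumes "sized_typing \<Gamma>' (JApp t u r) \<sigma> n'" "\<Gamma>' \<subseteq>\<^sub>e \<Gamma>" "n' \<le> n"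
  shows "app_mtyping \<Gamma> t u r {#\<sigma>#} n"
proof -
  from assms(1) obtain \<Gamma>1 ps \<tau>1 n1 \<Gamma>2 \<tau>2 n2 \<Gamma>3 n3 where
    "sized_mtyping \<Gamma>1 t (ch (arrows ps) \<tau>1) n1" "sized_mtyping \<Gamma>2 u (ch (arrow_doms ps) \<tau>2) n2"
    and r: "sized_typing (env_ext \<Gamma>3 (arrow_cods ps)) r \<sigma> n3"
    and env: "\<Gamma>1 \<and>\<^sub>e \<Gamma>2 \<and>\<^sub>e \<Gamma>3 \<subseteq>\<^sub>e \<Gamma>'" and n: "n' = Suc (n1 + n2 + n3)"
    by (rule sized_typing_JAppE)
  moreover from r have "sized_mtyping (env_ext \<Gamma>3 (arrow_cods ps)) r {#\<sigma>#} n3"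
    by (simp only: sized_mtyping_single)
  moreover from env assms(2) have "\<Gamma>1 \<and>\<^sub>e \<Gamma>2 \<and>\<^sub>e \<Gamma>3 \<subseteq>\<^sub>e \<Gamma>" by (rule env_le_trans)
  moreover from n assms(3) have "n1 + n2 + n3 + 1 \<le> n" by simp
  ultimately show ?thesis unfolding app_mtyping_def by blast
qed

lemma app_mtyping_add:
  assumes "app_mtyping \<Gamma>a t u r R na" "sized_typing \<Gamma>b (JApp t u r) \<sigma> nb" "\<Gamma>a \<and>\<^sub>e \<Gamma>b \<subseteq>\<^sub>e \<Gamma>"
  shows "app_mtyping \<Gamma> t u r (add_mset \<sigma> R) (na + nb)"
proof -
  from assms(1) obtain ps' \<tau>t \<tau>u \<Gamma>t \<Gamma>u \<Gamma>r nt nu nr where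
    t': "sized_mtyping \<Gamma>t t (ch (arrows ps') \<tau>t) nt" and
    u': "sized_mtyping \<Gamma>u u (ch (arrow_doms ps') \<tau>u) nu" and
    r': "sized_mtyping (env_ext \<Gamma>r (arrow_cods ps')) r R nr" and
    env': "\<Gamma>t \<and>\<^sub>e \<Gamma>u \<and>\<^sub>e \<Gamma>r \<subseteq>\<^sub>e \<Gamma>a" and n': "nt + nu + nr + 1 \<le> na"
    unfolding app_mtyping_def by blast
  from assms(2) obtain \<Gamma>1 ps \<tau>1 n1 \<Gamma>2 \<tau>2 n2 \<Gamma>3 n3 where
    t: "sized_mtyping \<Gamma>1 t (ch (arrows ps) \<tau>1) n1" and
    u: "sized_mtyping \<Gamma>2 u (ch (arrow_doms ps) \<tau>2) n2" and
    r: "sized_typing (env_ext \<Gamma>3 (arrow_cods ps)) r \<sigma> n3" and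
    env: "\<Gamma>1 \<and>\<^sub>e \<Gamma>2 \<and>\<^sub>e \<Gamma>3 \<subseteq>\<^sub>e \<Gamma>b" and n: "nb = Suc (n1 + n2 + n3)"
    by (rule sized_typing_JAppE)
  from t' t obtain \<tau>t' nt' where
    "sized_mtyping (\<Gamma>t \<and>\<^sub>e \<Gamma>1) t (ch (arrows (ps' @ ps)) \<tau>t') nt'" "nt' \<le> nt + n1"
    by (auto elim: sized_mtyping_ch_union)
  moreover from u' u obtain \<tau>u' nu' where
    "sized_mtyping (\<Gamma>u \<and>\<^sub>e \<Gamma>2) u (ch (arrow_doms (ps' @ ps)) \<tau>u') nu'" "nu' \<le> nu + n2"
    by (auto elim: sized_mtyping_ch_union)
  moreover have
    "sized_mtyping (env_ext (\<Gamma>r \<and>\<^sub>e \<Gamma>3) (arrow_cods (ps' @ ps))) r (add_mset \<sigma> R) (nr + n3)"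
    using s_add[OF r' r env_le_refl] by (simp add: env_ext_union)
  moreover have "(\<Gamma>t \<and>\<^sub>e \<Gamma>1) \<and>\<^sub>e (\<Gamma>u \<and>\<^sub>e \<Gamma>2) \<and>\<^sub>e (\<Gamma>r \<and>\<^sub>e \<Gamma>3) \<subseteq>\<^sub>e \<Gamma>a \<and>\<^sub>e \<Gamma>b"
    using env_union_mono[OF env' env] by (simp add: ac_simps)
  then have "(\<Gamma>t \<and>\<^sub>e \<Gamma>1) \<and>\<^sub>e (\<Gamma>u \<and>\<^sub>e \<Gamma>2) \<and>\<^sub>e (\<Gamma>r \<and>\<^sub>e \<Gamma>3) \<subseteq>\<^sub>e \<Gamma>"
    using assms(3) by (rule env_le_trans)
  moreover have "nt' + nu' + (nr + n3) + 1 \<le> na + nb"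
    using \<open>nt' \<le> nt + n1\<close> \<open>nu' \<le> nu + n2\<close> n n' by simp
  ultimately show ?thesis unfolding app_mtyping_def by blast
qed

lemma sized_mtyping_JApp:
  "sized_mtyping \<Gamma> (JApp t u r) R n \<Longrightarrow> R \<noteq> {#} \<Longrightarrow> app_mtyping \<Gamma> t u r R n"
proof (induction rule: sized_mtyping_induct)
  case (add \<Gamma>a R na \<Gamma>b \<sigma> nb \<Gamma>)
  show ?case
  proof (cases "R = {#}")
    case True
    with add.hyps(2,3) show ?thesis by (auto intro: app_mtyping_single env_le_unionD2)
  next
    case False
    with add show ?thesis by (auto intro: app_mtyping_add)
  qed
qed simp

lemma weight_decreases_pi_root:
  "weight_decreases 0 (JApp (JApp t u r) u' r') (JApp t u (JApp r (lift 0 u') (lift 1 r')))"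
  unfolding weight_decreases_def
proof (intro allI impI)
  fix \<Gamma> \<sigma> n
  assume "sized_typing \<Gamma> (JApp (JApp t u r) u' r') \<sigma> n"
  then obtain \<Gamma>1 ps \<tau>1 n1 \<Gamma>2 \<tau>2 n2 \<Gamma>3 n3 where
    tur: "sized_mtyping \<Gamma>1 (JApp t u r) (ch (arrows ps) \<tau>1) n1" and
    u': "sized_mtyping \<Gamma>2 u' (ch (arrow_doms ps) \<tau>2) n2" and
    r': "sized_typing (env_ext \<Gamma>3 (arrow_cods ps)) r' \<sigma> n3" and
    env: "\<Gamma>1 \<and>\<^sub>e \<Gamma>2 \<and>\<^sub>e \<Gamma>3 \<subseteq>\<^sub>e \<Gamma>" and n: "n = Suc (n1 + n2 + n3)"
    by (rule sized_typing_JAppE)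
  from sized_mtyping_JApp[OF tur ch_nonempty] obtain ps' \<tau>t \<tau>u \<Gamma>t \<Gamma>u \<Gamma>r nt nu nr where
    t: "sized_mtyping \<Gamma>t t (ch (arrows ps') \<tau>t) nt" and
    u: "sized_mtyping \<Gamma>u u (ch (arrow_doms ps') \<tau>u) nu" and
    r: "sized_mtyping (env_ext \<Gamma>r (arrow_cods ps')) r (ch (arrows ps) \<tau>1) nr" and
    env': "\<Gamma>t \<and>\<^sub>e \<Gamma>u \<and>\<^sub>e \<Gamma>r \<subseteq>\<^sub>e \<Gamma>1" and n': "nt + nu + nr + 1 \<le> n1"
    unfolding app_mtyping_def by blast
  have lu': "sized_mtyping (env_ext \<Gamma>2 {#}) (lift 0 u') (ch (arrow_doms ps) \<tau>2) n2"
    using u' by (rule sized_mtyping_lift0)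
  have lr': "sized_typing (env_ext (env_ext \<Gamma>3 {#}) (arrow_cods ps)) (lift 1 r') \<sigma> n3"
    using sized_typing_lift(1)[OF r', of 1] by (simp add: env_ext_lift[symmetric] env_lift_0)
  have "env_ext \<Gamma>r (arrow_cods ps') \<and>\<^sub>e env_ext \<Gamma>2 {#} \<and>\<^sub>e env_ext \<Gamma>3 {#}
      = env_ext (\<Gamma>r \<and>\<^sub>e \<Gamma>2 \<and>\<^sub>e \<Gamma>3) (arrow_cods ps')"
    using env_ext_union[of \<Gamma>r \<Gamma>2 "arrow_cods ps'" "{#}"]
      env_ext_union[of "\<Gamma>r \<and>\<^sub>e \<Gamma>2" \<Gamma>3 "arrow_cods ps'" "{#}"]
    by simp
  with s_app[OF r lu' lr'] have
    inner: "sized_typing (env_ext (\<Gamma>r \<and>\<^sub>e \<Gamma>2 \<and>\<^sub>e \<Gamma>3) (arrow_cods ps'))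
      (JApp r (lift 0 u') (lift 1 r')) \<sigma>
      (Suc (nr + n2 + n3))"
    by simp
  have "\<Gamma>t \<and>\<^sub>e \<Gamma>u \<and>\<^sub>e (\<Gamma>r \<and>\<^sub>e \<Gamma>2 \<and>\<^sub>e \<Gamma>3) \<subseteq>\<^sub>e \<Gamma>1 \<and>\<^sub>e \<Gamma>2 \<and>\<^sub>e \<Gamma>3"
    using env_union_mono[OF env' env_le_refl[of "\<Gamma>2 \<and>\<^sub>e \<Gamma>3"]] by (simp add: ac_simps)
  then have "\<Gamma>t \<and>\<^sub>e \<Gamma>u \<and>\<^sub>e (\<Gamma>r \<and>\<^sub>e \<Gamma>2 \<and>\<^sub>e \<Gamma>3) \<subseteq>\<^sub>e \<Gamma>" using env by (rule env_le_trans)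
  from s_app[OF t u inner this] n n'
  show "\<exists>n'. sized_typing \<Gamma> (JApp t u (JApp r (lift 0 u') (lift 1 r'))) \<sigma> n' \<and> n' + 0 \<le> n"
    by (intro exI[of _ "Suc (nt + nu + Suc (nr + n2 + n3))"]) simp
qed

lemma pi_weight_decreases: "pi t t' \<Longrightarrow> weight_decreases 0 t t'"
  by (induction rule: pi.induct)
     (blast intro: weight_decreases_pi_root weight_decreases_JLam
        weight_decreases_JApp1 weight_decreases_JApp2 weight_decreases_JApp3)+

section \<open>Strong normalisation\<close>

(* Counting the head of an application twice makes the pi-redex heavier than its contractum. *)
fun pi_measure :: "trm \<Rightarrow> nat" where
  "pi_measure (JVar _) = 1"
| "pi_measure (JLam t) = Suc (pi_measure t)"
| "pi_measure (JApp t u r) = Suc (2 * pi_measure t + pi_measure u + pi_measure r)"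

lemma pi_measure_lift [simp]: "pi_measure (lift k t) = pi_measure t"
  by (induction t arbitrary: k) auto

lemma pi_measure_pos: "0 < pi_measure t"
  by (cases t) auto

lemma pi_measure_decreasing: "pi t t' \<Longrightarrow> pi_measure t' < pi_measure t"
  by (induction rule: pi.induct) (auto simp: pi_measure_pos)

lemma accp_lex_descent:
  fixes P :: "'a \<Rightarrow> nat \<Rightarrow> bool" and m :: "'a \<Rightarrow> nat"
  assumes "P t n"
    and step: "\<And>t t' n. P t n \<Longrightarrow> R t t' \<Longrightarrow> \<exists>n'. P t' n' \<and> (n' < n \<or> n' = n \<and> m t' < m t)"
  shows "Wellfounded.accp (\<lambda>t' t. R t t') t"
  using assms(1)
proof (induction "(n, m t)" arbitrary: t n rule: wf_induct[OF wf_lex_prod[OF wf_less wf_less]])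
  case 1
  show ?case
  proof (rule accpI)
    fix t' assume "R t t'"
    with step[OF "1.prems"] obtain n' where "P t' n'" "n' < n \<or> n' = n \<and> m t' < m t"
      by blast
    with "1.hyps" show "Wellfounded.accp (\<lambda>t' t. R t t') t'" by auto
  qed
qed

lemma sized_typing_beta_pi_step:
  assumes "sized_typing \<Gamma> t \<sigma> n" "beta_pi t t'"
  obtains n' where "sized_typing \<Gamma> t' \<sigma> n'" "n' < n \<or> n' = n \<and> pi_measure t' < pi_measure t"
proof -
  from assms(2) consider "beta t t'" | "pi t t'" unfolding beta_pi_def by blast
  then show ?thesis
  proof cases
    case 1
    with assms(1) obtain n' where "sized_typing \<Gamma> t' \<sigma> n'" "n' + 1 \<le> n"
      using beta_weight_decreases unfolding weight_decreases_def by blast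
    then show ?thesis using that by simp
  next
    case 2
    with assms(1) obtain n' where "sized_typing \<Gamma> t' \<sigma> n'" "n' \<le> n"
      using pi_weight_decreases unfolding weight_decreases_def by fastforce
    then show ?thesis using that pi_measure_decreasing[OF 2] by (cases "n' = n") simp_all
  qed
qed

theorem mainTheorem16:
  assumes "typing \<Gamma> t \<sigma>"
  shows "SN beta_pi t"
proof -
  from typing_imp_sized_typing(1)[OF assms]
  obtain n where "\<exists>\<Gamma> \<sigma>. sized_typing \<Gamma> t \<sigma> n" by blast
  then show ?thesis
    unfolding SN_def
    by (rule accp_lex_descent[where P = "\<lambda>t n. \<exists>\<Gamma> \<sigma>. sized_typing \<Gamma> t \<sigma> n" and m = pi_measure])
       (blast elim: sized_typing_beta_pi_step)
qed

end
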